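(* Let $\boldsymbol\mu=\{\mu_t\}_{t>0}$ be a measurable factorizing family over $[0,1]\times L$, where $L$ is compact. Then the random-set system $\mathbb E^{\boldsymbol\mu}$ is spatial.
   Context: $L$ is a (compact) second countable Hausdorff space. For $t>0$, $\mathscr C_t$ is the space of closed subsets of $[0,t]\times L$ with the Borel $\sigma$-field $\Sigma_t$ of the Fell topology; $\oplus_{s,t}(Z_1,Z_2)=Z_1\cup\{(s+r,\ell):(r,\ell)\in Z_2\}$; $\sigma_t(Z)=\{(r/t,\ell):(r,\ell)\in Z\}$. A family of probability measures $\{\mu_t\}$ on $\mathscr C_t$ is a measurable factorizing family if: (i) $\mu_{s+t}\sim(\mu_s\otimes\mu_t)\circ\oplus_{s,t}^{-1}$ (mutual absolute continuity); (ii) $\mu_t(\{Z:Z\cap(\{r\}\times L)\neq\varnothing\})=0$ for all $t>0,r\in[0,t]$; (iii) no $\mu_t$ is supported on finitely many atoms; (iv a) there is a countable ring $\mathcal R\subset\Sigma_1$ generating $\Sigma_1$ with $t\mapsto(\sigma_t)_*\mu_t(A)$ Borel for each $A\in\mathcal R$; (iv b) there is a Borel $\Delta:(0,\infty)^2\times\mathscr C_1\to(0,\infty)$ with $\Delta(s,t,\sigma_{s+t}(Z))=\Delta_{s,t}(Z)$ $\mu_{s+t}$-a.e., $\Delta_{s,t}=d((\mu_s\otimes\mu_t)\circ\oplus_{s,t}^{-1})/d\mu_{s+t}$. The random-set system $\mathbb E^{\boldsymbol\mu}$ is the Arveson system with fibers $E_t=L^2(\mathscr C_t,\mu_t)$ and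 multiplication $U_{s,t}(f\otimes g)(Z)=\Delta_{s,t}(Z)^{1/2}f(Z\cap([0,s]\times L))g((Z\cap([s,s+t]\times L))-(s,0))$ (Borel structure generated by the sections $\mathbf 1_A$, $A\in\mathcal R$, after scaling by $\sigma_t$). It is spatial if it admits a unit: a nonzero Borel section $u_t\in E_t$ with $u_{s+t}=U_{s,t}(u_s\otimes u_t)$. *)

theory Defs
  imports "HOL-Probability.Probability"
begin

definition closed_sets_on :: "real \<Rightarrow> (real \<times> 'l::topological_space) set set" where
  "closed_sets_on t = {Z. closed Z \<and> Z \<subseteq> {0..t} \<times> UNIV}"

definition fell_topology :: "real \<Rightarrow> (real \<times> 'l::topological_space) set topology" where
  "fell_topology t = subtopology
     (topology_generated_by
        ({{F. F \<inter> K = {}} | K. compact K \<and> K \<subseteq> {0..t} \<times> UNIV} \<union>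
         {{F. F \<inter> G \<noteq> {}} | G. openin (top_of_set ({0..t} \<times> UNIV)) G}))
     (closed_sets_on t)"

definition CM :: "real \<Rightarrow> (real \<times> 'l::topological_space) set measure" where
  "CM t = sigma (closed_sets_on t) {U. openin (fell_topology t) U}"

definition shift_set :: "real \<Rightarrow> (real \<times> 'l) set \<Rightarrow> (real \<times> 'l) set" where
  "shift_set s Z = (\<lambda>(r, l). (s + r, l)) ` Z"

definition oplus :: "real \<Rightarrow> (real \<times> 'l) set \<times> (real \<times> 'l) set \<Rightarrow> (real \<times> 'l) set" where
  "oplus s = (\<lambda>(Z1, Z2). Z1 \<union> shift_set s Z2)"

definition time_scale :: "real \<Rightarrow> (real \<times> 'l) set \<Rightarrow> (real \<times> 'l) set" where
  "time_scale t Z = (\<lambda>(r, l). (r / t, l)) ` Z"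

definition concat_measure ::
  "(real \<Rightarrow> (real \<times> 'l::topological_space) set measure) \<Rightarrow> real \<Rightarrow> real \<Rightarrow> (real \<times> 'l) set measure" where
  "concat_measure \<mu> s t = distr (\<mu> s \<Otimes>\<^sub>M \<mu> t) (CM (s + t)) (oplus s)"

definition Delta_st ::
  "(real \<Rightarrow> (real \<times> 'l::topological_space) set measure) \<Rightarrow> real \<Rightarrow> real \<Rightarrow> (real \<times> 'l) set \<Rightarrow> real" where
  "Delta_st \<mu> s t = (\<lambda>Z. enn2real (RN_deriv (\<mu> (s + t)) (concat_measure \<mu> s t) Z))"

definition pos_reals :: "real measure" where
  "pos_reals = restrict_space borel {0<..}"

text \<open>Measurable factorizing family, with the witnesses R (condition (iv a)) and
  Delta (condition (iv b)) made explicit.\<close>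
definition measurable_factorizing_family ::
  "(real \<Rightarrow> (real \<times> 'l::topological_space) set measure) \<Rightarrow> (real \<times> 'l) set set set
   \<Rightarrow> (real \<Rightarrow> real \<Rightarrow> (real \<times> 'l) set \<Rightarrow> real) \<Rightarrow> bool" where
  "measurable_factorizing_family \<mu> R \<Delta> \<longleftrightarrow>
     \<comment> \<open>each mu_t is a probability measure on (C_t, Sigma_t)\<close>
     (\<forall>t>0. prob_space (\<mu> t) \<and> sets (\<mu> t) = sets (CM t)) \<and>
     \<comment> \<open>(i) mutual absolute continuity\<close>
     (\<forall>s>0. \<forall>t>0. absolutely_continuous (\<mu> (s + t)) (concat_measure \<mu> s t) \<and>
                  absolutely_continuous (concat_measure \<mu> s t) (\<mu> (s + t))) \<and>
     \<comment> \<open>(ii) no fixed atoms in time\<close>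
     (\<forall>t>0. \<forall>r\<in>{0..t}. emeasure (\<mu> t) {Z \<in> space (\<mu> t). Z \<inter> ({r} \<times> UNIV) \<noteq> {}} = 0) \<and>
     \<comment> \<open>(iii) no mu_t is supported on finitely many atoms\<close>
     (\<forall>t>0. \<not> (\<exists>F. finite F \<and> (AE Z in \<mu> t. Z \<in> F))) \<and>
     \<comment> \<open>(iv a) countable ring generating Sigma_1, with Borel dependence on t\<close>
     countable R \<and> ring_of_sets (closed_sets_on 1) R \<and>
     sigma_sets (closed_sets_on 1) R = sets (CM 1) \<and>
     (\<forall>A\<in>R. (\<lambda>t. measure (distr (\<mu> t) (CM 1) (time_scale t)) A) \<in> borel_measurable pos_reals) \<and>
     \<comment> \<open>(iv b) Borel jointly measurable version of the Radon-Nikodym derivatives\<close>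
     (\<lambda>((s, t), Z). \<Delta> s t Z) \<in> borel_measurable ((pos_reals \<Otimes>\<^sub>M pos_reals) \<Otimes>\<^sub>M CM 1) \<and>
     (\<forall>s>0. \<forall>t>0. \<forall>Z\<in>closed_sets_on 1. \<Delta> s t Z > 0) \<and>
     (\<forall>s>0. \<forall>t>0. AE Z in \<mu> (s + t). \<Delta> s t (time_scale (s + t) Z) = Delta_st \<mu> s t Z)"

definition U_prod ::
  "(real \<Rightarrow> (real \<times> 'l::topological_space) set measure) \<Rightarrow> real \<Rightarrow> real
   \<Rightarrow> ((real \<times> 'l) set \<Rightarrow> complex) \<Rightarrow> ((real \<times> 'l) set \<Rightarrow> complex) \<Rightarrow> (real \<times> 'l) set \<Rightarrow> complex" where
  "U_prod \<mu> s t f g = (\<lambda>Z. complex_of_real (sqrt (Delta_st \<mu> s t Z)) *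
      f (Z \<inter> ({0..s} \<times> UNIV)) *
      g ((\<lambda>(r, l). (r - s, l)) ` (Z \<inter> ({s..s + t} \<times> UNIV))))"

definition in_L2 :: "'a measure \<Rightarrow> ('a \<Rightarrow> complex) \<Rightarrow> bool" where
  "in_L2 M f \<longleftrightarrow> f \<in> borel_measurable M \<and> integrable M (\<lambda>x. (cmod (f x))\<^sup>2)"

text \<open>Borel sections of E^mu: sections u_t in E_t whose inner products with the generating
  sections t \<mapsto> 1_A o sigma_t (A in R) depend Borel-measurably on t.\<close>
definition borel_section ::
  "(real \<Rightarrow> (real \<times> 'l::topological_space) set measure) \<Rightarrow> (real \<times> 'l) set set set
   \<Rightarrow> (real \<Rightarrow> (real \<times> 'l) set \<Rightarrow> complex) \<Rightarrow> bool" where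
  "borel_section \<mu> R u \<longleftrightarrow>
     (\<forall>t>0. in_L2 (\<mu> t) (u t)) \<and>
     (\<forall>A\<in>R. (\<lambda>t. \<integral>Z. u t Z * indicator A (time_scale t Z) \<partial>\<mu> t) \<in> borel_measurable pos_reals)"

definition is_unit ::
  "(real \<Rightarrow> (real \<times> 'l::topological_space) set measure) \<Rightarrow> (real \<times> 'l) set set set
   \<Rightarrow> (real \<Rightarrow> (real \<times> 'l) set \<Rightarrow> complex) \<Rightarrow> bool" where
  "is_unit \<mu> R u \<longleftrightarrow>
     borel_section \<mu> R u \<and>
     (\<exists>t>0. \<not> (AE Z in \<mu> t. u t Z = 0)) \<and>
     (\<forall>s>0. \<forall>t>0. AE Z in \<mu> (s + t). u (s + t) Z = U_prod \<mu> s t (u s) (u t) Z)"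

definition spatial_random_set_system ::
  "(real \<Rightarrow> (real \<times> 'l::topological_space) set measure) \<Rightarrow> (real \<times> 'l) set set set \<Rightarrow> bool" where
  "spatial_random_set_system \<mu> R \<longleftrightarrow> (\<exists>u. is_unit \<mu> R u)"

end

theory Submission
  imports Defs
begin

(* The unit is the normalised indicator of the empty configuration,
   u_t = 1_{empty} / sqrt (mu_t {empty}).  A nonempty configuration on [0, s + t] meets
   [0, s] x L or [s, s + t] x L, so U_{s,t} (u_s (x) u_t) vanishes off the empty set, and at
   the empty set it equals u_{s+t} because
   Delta_{s,t} (empty) = mu_s {empty} mu_t {empty} / mu_{s+t} {empty}.
   Everything therefore rests on mu_t {empty} > 0 for all t > 0.  By (i), mu_{s+t} {empty} > 0
   iff mu_s {empty} > 0 and mu_t {empty} > 0, and mu_s {empty} = 0 would force almost every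
   configuration on [0, s + t] to meet [0, s] x L.  By (ii), mu_1-almost every Z misses
   {0} x L, and as L is compact such a Z misses [0, e] x L for some e > 0; so mu_e {empty} > 0
   for some small e, and this propagates to all t > 0. *)

lemma space_CM: "space (CM t) = closed_sets_on t"
  and sets_CM: "sets (CM t) = sigma_sets (closed_sets_on t) {U. openin (fell_topology t) U}"
proof -
  have "{U. openin (fell_topology t) U} \<subseteq> Pow (closed_sets_on t)"
    using openin_subset by (force simp: fell_topology_def)
  then show "space (CM t) = closed_sets_on t"
    and "sets (CM t) = sigma_sets (closed_sets_on t) {U. openin (fell_topology t) U}"
    unfolding CM_def by (rule space_measure_of, rule sets_measure_of)
qed

definition fell_subbasis :: "real \<Rightarrow> (real \<times> 'l::topological_space) set set set" where
  "fell_subbasis t = {{F. F \<inter> K = {}} | K. compact K \<and> K \<subseteq> {0..t} \<times> UNIV} \<union>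
     {{F. F \<inter> G \<noteq> {}} | G. openin (top_of_set ({0..t} \<times> UNIV)) G}"

lemma fell_topology_eq_subbasis:
  "fell_topology t = subtopology (topology_generated_by (fell_subbasis t)) (closed_sets_on t)"
  unfolding fell_topology_def fell_subbasis_def ..

lemma miss_set_in_CM:
  assumes "compact K" "K \<subseteq> {0..t} \<times> UNIV"
  shows "{F \<in> closed_sets_on t. F \<inter> K = {}} \<in> sets (CM t)"
proof -
  have "openin (topology_generated_by (fell_subbasis t)) {F. F \<inter> K = {}}"
    using assms by (intro topology_generated_by_Basis) (auto simp: fell_subbasis_def)
  then have "openin (fell_topology t) ({F. F \<inter> K = {}} \<inter> closed_sets_on t)"
    unfolding fell_topology_eq_subbasis openin_subtopology by blast
  then show ?thesis
    unfolding sets_CM by (auto simp: Collect_conj_eq Int_commute)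
qed

lemma singleton_empty_in_CM:
  assumes "compact (UNIV :: 'l::topological_space set)"
  shows "{{}} \<in> sets (CM t :: (real \<times> 'l) set measure)"
proof -
  have "{F \<in> closed_sets_on t. F \<inter> ({0..t} \<times> (UNIV :: 'l set)) = {}} \<in> sets (CM t)"
    using assms by (intro miss_set_in_CM) (auto simp: compact_Times)
  moreover have "{F \<in> closed_sets_on t. F \<inter> ({0..t} \<times> (UNIV :: 'l set)) = {}} = {{}}"
    by (auto simp: closed_sets_on_def)
  ultimately show ?thesis by simp
qed

lemma time_scale_eq_vimage: "t \<noteq> 0 \<Longrightarrow> time_scale t X = (\<lambda>(r, l). (r * t, l)) -` X"
  unfolding time_scale_def by (force simp: image_iff)

lemma time_scale_disjoint_iff:
  "t \<noteq> 0 \<Longrightarrow> time_scale t F \<inter> X = {} \<longleftrightarrow> F \<inter> time_scale (1 / t) X = {}"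
proof -
  assume "t \<noteq> 0"
  then have "time_scale (1 / t) X = (\<lambda>(r, l). (r / t, l)) -` X"
    using time_scale_eq_vimage[of "1 / t"] by simp
  then show ?thesis
    unfolding time_scale_def[of t] by auto
qed

lemma continuous_on_scale_fst: "continuous_on UNIV (\<lambda>(r, l). (r * c :: real, l))"
  by (simp add: case_prod_beta continuous_intros)

lemma time_scale_vimage_fell_subbasis:
  assumes t: "t > 0" and B: "B \<in> fell_subbasis 1"
  shows "time_scale t -` B \<in> (fell_subbasis t :: (real \<times> 'l::topological_space) set set set)"
proof -
  from B consider (miss) K :: "(real \<times> 'l) set"
      where "B = {F. F \<inter> K = {}}" "compact K" "K \<subseteq> {0..1} \<times> UNIV"
    | (hit) G :: "(real \<times> 'l) set"
      where "B = {F. F \<inter> G \<noteq> {}}" "openin (top_of_set ({0..1} \<times> UNIV)) G"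
    unfolding fell_subbasis_def by blast
  then show ?thesis
  proof cases
    case miss
    have "time_scale t -` B = {F. F \<inter> time_scale (1 / t) K = {}}"
      using miss(1) t by (simp add: time_scale_disjoint_iff)
    moreover have "compact (time_scale (1 / t) K)"
    proof -
      have "time_scale (1 / t) K = (\<lambda>(r, l). (r * t, l)) ` K"
        by (simp add: time_scale_def)
      then show ?thesis
        using compact_continuous_image[OF continuous_on_subset[OF continuous_on_scale_fst] miss(2)]
        by simp
    qed
    moreover have "time_scale (1 / t) K \<subseteq> {0..t} \<times> UNIV"
      using miss(3) t by (auto simp: time_scale_def)
    ultimately show ?thesis
      unfolding fell_subbasis_def by blast
  next
    case hit
    obtain W where W: "open W" "G = ({0..1} \<times> UNIV) \<inter> W"
      using hit(2) by (auto simp: openin_open)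
    have "time_scale t -` B = {F. F \<inter> time_scale (1 / t) G \<noteq> {}}"
      using hit(1) t by (simp add: time_scale_disjoint_iff)
    moreover have "time_scale (1 / t) G = ({0..t} \<times> UNIV) \<inter> (\<lambda>(r, l). (r * (1 / t), l)) -` W"
      using t W(2) by (auto simp: time_scale_eq_vimage divide_le_eq_1 zero_le_divide_iff)
    moreover have "open ((\<lambda>(r, l). (r * (1 / t), l)) -` W :: (real \<times> 'l) set)"
      using open_vimage[OF W(1) continuous_on_scale_fst[of "1 / t"]] by simp
    ultimately show ?thesis
      unfolding fell_subbasis_def openin_open by blast
  qed
qed

lemma time_scale_closed_sets_on:
  assumes t: "t > 0" and Z: "Z \<in> closed_sets_on t"
  shows "time_scale t Z \<in> closed_sets_on 1"
proof -
  have "closed (time_scale t Z)"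
    using Z t unfolding time_scale_eq_vimage[OF less_imp_neq[OF t, symmetric]]
    by (intro closed_vimage[OF _ continuous_on_scale_fst]) (simp add: closed_sets_on_def)
  moreover have "time_scale t Z \<subseteq> {0..1} \<times> UNIV"
    using Z t by (auto simp: closed_sets_on_def time_scale_def)
  ultimately show ?thesis
    by (simp add: closed_sets_on_def)
qed

lemma measurable_time_scale:
  assumes t: "t > 0"
  shows "time_scale t \<in> (CM t :: (real \<times> 'l::topological_space) set measure) \<rightarrow>\<^sub>M CM 1"
  unfolding CM_def[of 1]
proof (rule measurable_measure_of)
  show "{U. openin (fell_topology 1) U} \<subseteq> Pow (closed_sets_on 1)"
    using openin_subset by (force simp: fell_topology_def)
  show "time_scale t \<in> space (CM t) \<rightarrow> closed_sets_on 1"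
    using time_scale_closed_sets_on[OF t] by (auto simp: space_CM)
  fix U :: "(real \<times> 'l) set set"
  assume "U \<in> {U. openin (fell_topology 1) U}"
  then obtain T where T: "openin (topology_generated_by (fell_subbasis 1)) T"
    and U: "U = T \<inter> closed_sets_on 1"
    by (auto simp: fell_topology_eq_subbasis openin_subtopology)
  have "generate_topology_on (fell_subbasis t) (time_scale t -` T)"
    using openin_topology_generated_by[OF T]
  proof induction
    case (Basis s)
    then show ?case
      using time_scale_vimage_fell_subbasis[OF t] by (intro generate_topology_on.Basis)
  qed (auto intro: generate_topology_on.intros simp: vimage_Union vimage_Int)
  then have "openin (fell_topology t) (time_scale t -` T \<inter> closed_sets_on t)"
    unfolding fell_topology_eq_subbasis openin_subtopology openin_topology_generated_by_iff
    by blast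
  moreover have "time_scale t -` U \<inter> space (CM t) = time_scale t -` T \<inter> closed_sets_on t"
    using time_scale_closed_sets_on[OF t] by (auto simp: U space_CM)
  ultimately show "time_scale t -` U \<inter> space (CM t) \<in> sets (CM t)"
    by (simp add: sets_CM)
qed

lemma compact_disjoint_initial_strip:
  fixes F :: "(real \<times> 'l::topological_space) set"
  assumes "compact F" "F \<subseteq> {0..} \<times> UNIV" "F \<inter> ({0} \<times> UNIV) = {}"
  shows "\<exists>n::nat. F \<inter> ({0..1 / (real n + 2)} \<times> UNIV) = {}"
proof (cases "F = {}")
  case False
  have "compact (fst ` F)"
    using assms(1) by (intro compact_continuous_image continuous_intros)
  then obtain r0 where r0: "r0 \<in> fst ` F" "\<And>r. r \<in> fst ` F \<Longrightarrow> r0 \<le> r"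
    using compact_attains_inf[of "fst ` F"] False by auto
  have "r0 > 0"
  proof -
    obtain l where "(r0, l) \<in> F"
      using r0(1) by force
    then have "r0 \<ge> 0" "r0 \<noteq> 0"
      using assms(2,3) by auto
    then show ?thesis
      by simp
  qed
  then obtain n where n: "inverse (real (Suc n)) < r0"
    using reals_Archimedean by blast
  have "1 / (real n + 2) \<le> inverse (real (Suc n))"
    by (simp add: divide_simps)
  with n have "1 / (real n + 2) < r0"
    by linarith
  have "F \<inter> ({0..1 / (real n + 2)} \<times> UNIV) = {}"
  proof (rule ccontr)
    assume "F \<inter> ({0..1 / (real n + 2)} \<times> UNIV) \<noteq> {}"
    then obtain r l where "(r, l) \<in> F" "r \<le> 1 / (real n + 2)"
      by auto
    then show False
      using r0(2)[of r] \<open>1 / (real n + 2) < r0\<close> by force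
  qed
  then show ?thesis ..
qed simp

lemma RN_deriv_singleton:
  assumes "sigma_finite_measure M" "absolutely_continuous M N" "sets N = sets M" "{x} \<in> sets M"
  shows "RN_deriv M N x * emeasure M {x} = emeasure N {x}"
proof -
  interpret sigma_finite_measure M by fact
  have "emeasure N {x} = emeasure (density M (RN_deriv M N)) {x}"
    using density_RN_deriv[OF assms(2,3)] by simp
  also have "\<dots> = (\<integral>\<^sup>+ y. RN_deriv M N y * indicator {x} y \<partial>M)"
    using assms(4) by (rule emeasure_density[OF borel_measurable_RN_deriv])
  also have "\<dots> = RN_deriv M N x * emeasure M {x}"
    using assms(4) by simp
  finally show ?thesis ..
qed

locale factorizing_family =
  fixes \<mu> :: "real \<Rightarrow> (real \<times> 'l::topological_space) set measure"
  assumes compact_UNIV: "compact (UNIV :: 'l set)"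
    and prob_space_mu: "t > 0 \<Longrightarrow> prob_space (\<mu> t)"
    and sets_mu: "t > 0 \<Longrightarrow> sets (\<mu> t) = sets (CM t)"
    and mu_ac_concat: "s > 0 \<Longrightarrow> t > 0 \<Longrightarrow> absolutely_continuous (\<mu> (s + t)) (concat_measure \<mu> s t)"
    and concat_ac_mu: "s > 0 \<Longrightarrow> t > 0 \<Longrightarrow> absolutely_continuous (concat_measure \<mu> s t) (\<mu> (s + t))"
    and no_fixed_atoms:
      "t > 0 \<Longrightarrow> r \<in> {0..t} \<Longrightarrow> emeasure (\<mu> t) {Z \<in> space (\<mu> t). Z \<inter> ({r} \<times> UNIV) \<noteq> {}} = 0"
begin

lemma space_mu: "t > 0 \<Longrightarrow> space (\<mu> t) = closed_sets_on t"
  using sets_eq_imp_space_eq[OF sets_mu] space_CM by metis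

lemma measurable_time_scale_mu: "t > 0 \<Longrightarrow> time_scale t \<in> \<mu> t \<rightarrow>\<^sub>M CM 1"
  using measurable_time_scale measurable_cong_sets[OF sets_mu refl] by blast

lemma singleton_empty_in_sets_mu: "t > 0 \<Longrightarrow> {{}} \<in> sets (\<mu> t)"
  using sets_mu singleton_empty_in_CM[OF compact_UNIV] by simp

lemma compact_strip: "compact ({a..b :: real} \<times> (UNIV :: 'l set))"
  using compact_UNIV by (simp add: compact_Times)

lemma compact_closed_sets_on: "Z \<in> closed_sets_on t \<Longrightarrow> compact (Z :: (real \<times> 'l) set)"
  using closed_Int_compact[OF _ compact_strip[of 0 t], of Z]
  by (simp add: closed_sets_on_def Int_absorb2)

(* Measurability of oplus is never established: the distribution defining concat_measure
   is not degenerate, because the probability measure mu (s + t) is absolutely continuous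
   with respect to it. *)
lemma emeasure_concat_measure:
  assumes s: "s > 0" and t: "t > 0" and A: "A \<in> sets (CM (s + t))"
  shows "emeasure (concat_measure \<mu> s t) A = emeasure (\<mu> s \<Otimes>\<^sub>M \<mu> t) (oplus s -` A \<inter> space (\<mu> s \<Otimes>\<^sub>M \<mu> t))"
proof -
  let ?P = "\<mu> s \<Otimes>\<^sub>M \<mu> t"
  let ?\<nu> = "\<lambda>A. emeasure ?P (oplus s -` A \<inter> space ?P)"
  let ?\<Omega> = "space (CM (s + t) :: (real \<times> 'l) set measure)"
  have emeasure_concat: "emeasure (concat_measure \<mu> s t) B =
      (if B \<in> sets (CM (s + t)) \<and> measure_space ?\<Omega> (sets (CM (s + t))) ?\<nu> then ?\<nu> B else 0)" for B
    unfolding concat_measure_def distr_def emeasure_measure_of_conv sets.sigma_sets_eq ..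
  have "measure_space ?\<Omega> (sets (CM (s + t))) ?\<nu>"
  proof (rule ccontr)
    assume "\<not> ?thesis"
    then have "?\<Omega> \<in> null_sets (concat_measure \<mu> s t)"
      using emeasure_concat[of ?\<Omega>] by (simp add: null_sets_def concat_measure_def)
    then have "space (\<mu> (s + t)) \<in> null_sets (\<mu> (s + t))"
      using concat_ac_mu[OF s t] sets_eq_imp_space_eq[OF sets_mu[of "s + t"]] s t
      unfolding absolutely_continuous_def by auto
    then show False
      using prob_space.emeasure_space_1[OF prob_space_mu[of "s + t"]] s t by (simp add: null_sets_def)
  qed
  then show ?thesis
    using emeasure_concat[of A] A by simp
qed

lemma emeasure_concat_measure_empty:
  assumes s: "s > 0" and t: "t > 0"
  shows "emeasure (concat_measure \<mu> s t) {{}} = emeasure (\<mu> s) {{}} * emeasure (\<mu> t) {{}}"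
proof -
  interpret sigma_finite_measure "\<mu> t"
    using prob_space_mu[OF t] by (rule prob_space_imp_sigma_finite)
  have "oplus s -` {{}} \<inter> space (\<mu> s \<Otimes>\<^sub>M \<mu> t) = {{}} \<times> {{}}"
    using s t by (auto simp: space_pair_measure space_mu oplus_def shift_set_def closed_sets_on_def)
  then have "emeasure (concat_measure \<mu> s t) {{}} = emeasure (\<mu> s \<Otimes>\<^sub>M \<mu> t) ({{}} \<times> {{}})"
    by (simp only: emeasure_concat_measure[OF s t singleton_empty_in_CM[OF compact_UNIV]])
  also have "\<dots> = emeasure (\<mu> s) {{}} * emeasure (\<mu> t) {{}}"
    using singleton_empty_in_sets_mu s t by (intro emeasure_pair_measure_Times)
  finally show ?thesis .
qed

lemma emeasure_empty_add_eq_0_iff: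
  assumes s: "s > 0" and t: "t > 0"
  shows "emeasure (\<mu> (s + t)) {{}} = 0 \<longleftrightarrow> emeasure (\<mu> s) {{}} = 0 \<or> emeasure (\<mu> t) {{}} = 0"
proof -
  have "{{}} \<in> sets (\<mu> (s + t))" "{{}} \<in> sets (concat_measure \<mu> s t)"
    using singleton_empty_in_sets_mu s t singleton_empty_in_CM[OF compact_UNIV]
    by (auto simp: concat_measure_def)
  then have "emeasure (\<mu> (s + t)) {{}} = 0 \<longleftrightarrow> emeasure (concat_measure \<mu> s t) {{}} = 0"
    using mu_ac_concat[OF s t] concat_ac_mu[OF s t]
    unfolding absolutely_continuous_def null_sets_def by blast
  then show ?thesis
    using emeasure_concat_measure_empty[OF s t] by simp
qed

lemma emeasure_disjoint_initial_strip:
  assumes s: "s > 0" and t: "t > 0" and empty_null: "emeasure (\<mu> s) {{}} = 0"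
  shows "emeasure (\<mu> (s + t)) {F \<in> closed_sets_on (s + t). F \<inter> ({0..s} \<times> UNIV) = {}} = 0"
proof -
  let ?B = "{F \<in> closed_sets_on (s + t). F \<inter> ({0..s} \<times> (UNIV :: 'l set)) = {}}"
  let ?P = "\<mu> s \<Otimes>\<^sub>M \<mu> t"
  interpret sigma_finite_measure "\<mu> t"
    using prob_space_mu[OF t] by (rule prob_space_imp_sigma_finite)
  have B: "?B \<in> sets (CM (s + t))"
    using t by (intro miss_set_in_CM compact_strip) auto
  have "oplus s -` ?B \<inter> space ?P \<subseteq> {{}} \<times> space (\<mu> t)"
    using s t by (auto simp: space_pair_measure space_mu oplus_def closed_sets_on_def)
  then have "emeasure ?P (oplus s -` ?B \<inter> space ?P) \<le> emeasure ?P ({{}} \<times> space (\<mu> t))"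
    using singleton_empty_in_sets_mu s by (intro emeasure_mono) auto
  also have "\<dots> = 0"
    using singleton_empty_in_sets_mu s empty_null by (simp add: emeasure_pair_measure_Times)
  finally have "?B \<in> null_sets (concat_measure \<mu> s t)"
    using emeasure_concat_measure[OF s t B] B by (simp add: null_sets_def concat_measure_def)
  then show ?thesis
    using concat_ac_mu[OF s t] unfolding absolutely_continuous_def by auto
qed

lemma ex_small_time_emeasure_empty_nonzero: "\<exists>n::nat. emeasure (\<mu> (1 / (real n + 2))) {{}} \<noteq> 0"
proof (rule ccontr)
  assume "\<nexists>n::nat. emeasure (\<mu> (1 / (real n + 2))) {{}} \<noteq> 0"
  then have empty_null: "emeasure (\<mu> (1 / (real n + 2))) {{}} = 0" for n
    by simp
  define B where "B n = {F \<in> closed_sets_on 1. F \<inter> ({0..1 / (real n + 2)} \<times> (UNIV :: 'l set)) = {}}"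
    for n :: nat
  define M0 where "M0 = {F \<in> closed_sets_on 1. F \<inter> ({0} \<times> (UNIV :: 'l set)) = {}}"
  have "B n \<in> null_sets (\<mu> 1)" for n
  proof -
    have small: "1 / (real n + 2) < 1"
      by (simp add: divide_simps)
    then have "emeasure (\<mu> 1) (B n) = 0"
      using emeasure_disjoint_initial_strip[of "1 / (real n + 2)" "1 - 1 / (real n + 2)"] empty_null
      by (simp add: B_def)
    moreover have "B n \<in> sets (\<mu> 1)"
      unfolding B_def sets_mu[OF zero_less_one]
      by (intro miss_set_in_CM compact_strip) (auto intro: order_trans[OF _ less_imp_le[OF small]])
    ultimately show ?thesis
      by (simp add: null_sets_def)
  qed
  then have "(\<Union>n. B n) \<in> null_sets (\<mu> 1)"
    by (intro null_sets_UN)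
  moreover have "M0 \<in> sets (\<mu> 1)"
    unfolding M0_def sets_mu[OF zero_less_one]
    by (intro miss_set_in_CM) (use compact_strip[of 0 0] in auto)
  moreover have "M0 \<subseteq> (\<Union>n. B n)"
  proof
    fix F assume F: "F \<in> M0"
    then have "compact F"
      by (auto simp: M0_def intro: compact_closed_sets_on)
    then show "F \<in> (\<Union>n. B n)"
    proof -
      have "F \<subseteq> {0..} \<times> UNIV" "F \<inter> ({0} \<times> UNIV) = {}"
        using F by (auto simp: M0_def closed_sets_on_def)
      then obtain n where "F \<inter> ({0..1 / (real n + 2)} \<times> UNIV) = {}"
        using compact_disjoint_initial_strip[OF \<open>compact F\<close>] by blast
      then show ?thesis
        using F by (auto simp: M0_def B_def)
    qed
  qed
  ultimately have "M0 \<in> null_sets (\<mu> 1)"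
    by (rule null_sets_subset)
  moreover have "space (\<mu> 1) - M0 \<in> null_sets (\<mu> 1)"
  proof -
    have "space (\<mu> 1) - M0 = {Z \<in> space (\<mu> 1). Z \<inter> ({0} \<times> UNIV) \<noteq> {}}"
      unfolding M0_def space_mu[OF zero_less_one] by blast
    then have "emeasure (\<mu> 1) (space (\<mu> 1) - M0) = 0"
      using no_fixed_atoms[of 1 0] by simp
    then show ?thesis
      using sets.compl_sets[OF \<open>M0 \<in> sets (\<mu> 1)\<close>] by (simp add: null_sets_def)
  qed
  ultimately have "(space (\<mu> 1) - M0) \<union> M0 \<in> null_sets (\<mu> 1)"
    by (intro null_sets.Un)
  moreover have "(space (\<mu> 1) - M0) \<union> M0 = space (\<mu> 1)"
    using sets.sets_into_space[OF \<open>M0 \<in> sets (\<mu> 1)\<close>] by blast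
  ultimately have "space (\<mu> 1) \<in> null_sets (\<mu> 1)"
    by simp
  then show False
    using prob_space.emeasure_space_1[OF prob_space_mu[OF zero_less_one]] by (simp add: null_sets_def)
qed

lemma measure_empty_pos:
  assumes t: "t > 0"
  shows "measure (\<mu> t) {{}} > 0"
proof -
  interpret prob_space "\<mu> t"
    using prob_space_mu[OF t] .
  obtain n :: nat where n: "emeasure (\<mu> (1 / (real n + 2))) {{}} \<noteq> 0"
    using ex_small_time_emeasure_empty_nonzero by blast
  define \<epsilon> where "\<epsilon> = 1 / (real n + 2)"
  have \<epsilon>: "\<epsilon> > 0"
    by (simp add: \<epsilon>_def)
  have multiple: "emeasure (\<mu> (real (Suc k) * \<epsilon>)) {{}} \<noteq> 0" for k
  proof (induction k)
    case (Suc k)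
    have "real (Suc (Suc k)) * \<epsilon> = real (Suc k) * \<epsilon> + \<epsilon>"
      by (simp add: algebra_simps)
    then show ?case
      using emeasure_empty_add_eq_0_iff[of "real (Suc k) * \<epsilon>" \<epsilon>] Suc \<epsilon> n
      by (simp add: \<epsilon>_def)
  qed (use n in \<open>simp add: \<epsilon>_def\<close>)
  obtain k where k: "t < real k * \<epsilon>"
    using ex_less_of_nat_mult[OF \<epsilon>] by blast
  moreover have "real k * \<epsilon> \<le> real (Suc k) * \<epsilon>"
    using \<epsilon> by (intro mult_right_mono) auto
  ultimately have "t < real (Suc k) * \<epsilon>"
    by linarith
  then have "emeasure (\<mu> t) {{}} \<noteq> 0"
    using multiple[of k] emeasure_empty_add_eq_0_iff[of t "real (Suc k) * \<epsilon> - t"] t by simp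
  then show ?thesis
    by (simp add: emeasure_eq_measure less_le)
qed

lemma Delta_st_empty:
  assumes s: "s > 0" and t: "t > 0"
  shows "Delta_st \<mu> s t {} = measure (\<mu> s) {{}} * measure (\<mu> t) {{}} / measure (\<mu> (s + t)) {{}}"
proof -
  have st: "s + t > 0"
    using s t by simp
  have "RN_deriv (\<mu> (s + t)) (concat_measure \<mu> s t) {} * emeasure (\<mu> (s + t)) {{}}
      = emeasure (\<mu> s) {{}} * emeasure (\<mu> t) {{}}"
    using RN_deriv_singleton[OF prob_space_imp_sigma_finite[OF prob_space_mu[OF st]] mu_ac_concat[OF s t]]
      singleton_empty_in_sets_mu[OF st] emeasure_concat_measure_empty[OF s t]
    by (simp add: concat_measure_def sets_mu[OF st])
  then have "Delta_st \<mu> s t {} * measure (\<mu> (s + t)) {{}} = measure (\<mu> s) {{}} * measure (\<mu> t) {{}}"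
    unfolding Delta_st_def measure_def by (metis enn2real_mult)
  then show ?thesis
    using measure_empty_pos[OF st] by (simp add: field_simps)
qed

definition empty_unit :: "real \<Rightarrow> (real \<times> 'l) set \<Rightarrow> complex" where
  "empty_unit t Z = complex_of_real (indicator {{}} Z / sqrt (measure (\<mu> t) {{}}))"

lemma in_L2_empty_unit:
  assumes t: "t > 0"
  shows "in_L2 (\<mu> t) (empty_unit t)"
proof -
  interpret prob_space "\<mu> t"
    using prob_space_mu[OF t] .
  have [measurable]: "{{}} \<in> sets (\<mu> t)"
    using singleton_empty_in_sets_mu[OF t] .
  have "(\<lambda>Z. (cmod (empty_unit t Z))\<^sup>2) = (\<lambda>Z. indicator {{}} Z / measure (\<mu> t) {{}})"
    using measure_empty_pos[OF t]
    by (auto simp: fun_eq_iff empty_unit_def indicator_def norm_divide power_divide)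
  moreover have "integrable (\<mu> t) (\<lambda>Z. indicator {{}} Z / measure (\<mu> t) {{}})"
    by (intro integrable_divide integrable_real_indicator) (auto simp: less_top[symmetric])
  moreover have "empty_unit t \<in> borel_measurable (\<mu> t)"
    unfolding empty_unit_def[abs_def] by measurable
  ultimately show ?thesis
    by (simp add: in_L2_def)
qed

lemma integral_empty_unit_indicator:
  assumes t: "t > 0"
  shows "(\<integral>Z. empty_unit t Z * indicator A (time_scale t Z) \<partial>\<mu> t)
    = complex_of_real (sqrt (measure (\<mu> t) {{}}) * indicator A {})"
proof -
  interpret prob_space "\<mu> t"
    using prob_space_mu[OF t] .
  let ?c = "complex_of_real (indicator A {} / sqrt (measure (\<mu> t) {{}}))"
  have "(\<integral>Z. empty_unit t Z * indicator A (time_scale t Z) \<partial>\<mu> t) = (\<integral>Z. indicator {{}} Z *\<^sub>R ?c \<partial>\<mu> t)"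
    by (intro Bochner_Integration.integral_cong)
       (auto simp: empty_unit_def time_scale_def indicator_def)
  also have "\<dots> = (\<integral>Z. indicator {{}} Z \<partial>\<mu> t) *\<^sub>R ?c"
    using singleton_empty_in_sets_mu[OF t]
    by (intro integral_scaleR_left integrable_real_indicator) (auto simp: less_top[symmetric])
  also have "\<dots> = measure (\<mu> t) {{}} *\<^sub>R ?c"
    using singleton_empty_in_sets_mu[OF t] sets.sets_into_space by (simp add: Int_absorb2)
  also have "\<dots> = complex_of_real (sqrt (measure (\<mu> t) {{}}) * indicator A {})"
  proof -
    have "measure (\<mu> t) {{}} * (indicator A {} / sqrt (measure (\<mu> t) {{}}))
        = sqrt (measure (\<mu> t) {{}}) * indicator A {}"
      using real_div_sqrt[of "measure (\<mu> t) {{}}"] by (simp add: times_divide_eq_left[symmetric])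
    then show ?thesis
      by (simp add: scaleR_conv_of_real flip: of_real_mult of_real_divide)
  qed
  finally show ?thesis .
qed

lemma empty_unit_not_AE_zero:
  assumes t: "t > 0"
  shows "\<not> (AE Z in \<mu> t. empty_unit t Z = 0)"
proof -
  interpret prob_space "\<mu> t"
    using prob_space_mu[OF t] .
  have "{Z \<in> space (\<mu> t). empty_unit t Z \<noteq> 0} = {{}}"
    using measure_empty_pos[OF t]
    by (auto simp: empty_unit_def space_mu[OF t] closed_sets_on_def indicator_def)
  then have "(AE Z in \<mu> t. empty_unit t Z = 0) \<longleftrightarrow> emeasure (\<mu> t) {{}} = 0"
    by (intro AE_iff_measurable[OF singleton_empty_in_sets_mu[OF t]]) auto
  then show ?thesis
    using measure_empty_pos[OF t] by (simp add: emeasure_eq_measure)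
qed

lemma empty_unit_factorizes:
  assumes s: "s > 0" and t: "t > 0" and Z: "Z \<in> closed_sets_on (s + t)"
  shows "empty_unit (s + t) Z = U_prod \<mu> s t (empty_unit s) (empty_unit t) Z"
proof (cases "Z = {}")
  case True
  have "sqrt (measure (\<mu> s) {{}} * measure (\<mu> t) {{}} / measure (\<mu> (s + t)) {{}})
      / sqrt (measure (\<mu> s) {{}}) / sqrt (measure (\<mu> t) {{}}) = 1 / sqrt (measure (\<mu> (s + t)) {{}})"
    using measure_empty_pos[OF s] measure_empty_pos[OF t] measure_empty_pos[of "s + t"] s t
    by (simp add: real_sqrt_mult real_sqrt_divide)
  then show ?thesis
    using True by (simp add: U_prod_def empty_unit_def Delta_st_empty[OF s t] flip: of_real_mult of_real_divide)
next
  case False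
  have "Z \<inter> ({0..s} \<times> UNIV) \<noteq> {} \<or> Z \<inter> ({s..s + t} \<times> UNIV) \<noteq> {}"
    using False Z by (force simp: closed_sets_on_def)
  then show ?thesis
    using False by (auto simp: U_prod_def empty_unit_def indicator_def)
qed

end

locale borel_factorizing_family = factorizing_family \<mu>
  for \<mu> :: "real \<Rightarrow> (real \<times> 'l::topological_space) set measure" +
  fixes R :: "(real \<times> 'l) set set set"
  assumes ring_of_sets_R: "ring_of_sets (closed_sets_on 1) R"
    and sigma_sets_R: "sigma_sets (closed_sets_on 1) R = sets (CM 1)"
    and borel_measurable_scaled_measure:
      "A \<in> R \<Longrightarrow> (\<lambda>t. measure (distr (\<mu> t) (CM 1) (time_scale t)) A) \<in> borel_measurable pos_reals"
begin

lemma measurable_time_scaled_family: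
  shows "(\<lambda>t. distr (\<mu> t) (CM 1) (time_scale t)) \<in> pos_reals \<rightarrow>\<^sub>M subprob_algebra (CM 1)"
proof -
  interpret R: ring_of_sets "closed_sets_on 1" R
    by (fact ring_of_sets_R)
  have space_pos_reals: "space pos_reals = {0<..}"
    by (simp add: pos_reals_def)
  have prob: "prob_space (distr (\<mu> t) (CM 1) (time_scale t))" if "t \<in> space pos_reals" for t
  proof -
    have t: "t > 0"
      using that space_pos_reals by simp
    show ?thesis
      by (rule prob_space.prob_space_distr[OF prob_space_mu[OF t] measurable_time_scale_mu[OF t]])
  qed
  show ?thesis
  proof (rule measurable_subprob_algebra_generated[OF sigma_sets_R[symmetric]])
    show "Int_stable R"
      by (auto simp: Int_stable_def)
    show "R \<subseteq> Pow (closed_sets_on 1)"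
      by (rule R.space_closed)
    fix A assume "A \<in> R"
    then show "(\<lambda>t. emeasure (distr (\<mu> t) (CM 1) (time_scale t)) A) \<in> borel_measurable pos_reals"
      using borel_measurable_scaled_measure prob
      by (subst measurable_cong[where g = "\<lambda>t. ennreal (measure (distr (\<mu> t) (CM 1) (time_scale t)) A)"])
         (auto simp: finite_measure.emeasure_eq_measure prob_space.finite_measure)
  next
    show "(\<lambda>t. emeasure (distr (\<mu> t) (CM 1) (time_scale t)) (closed_sets_on 1)) \<in> borel_measurable pos_reals"
    proof (subst measurable_cong[where g = "\<lambda>_. 1"])
      show "emeasure (distr (\<mu> t) (CM 1) (time_scale t)) (closed_sets_on 1) = 1"
        if "t \<in> space pos_reals" for t
        using prob_space.emeasure_space_1[OF prob[OF that]] by (simp add: space_CM)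
    qed simp
  qed (use prob prob_space_imp_subprob_space in auto)
qed

lemma borel_measurable_measure_empty:
  shows "(\<lambda>t. measure (\<mu> t) {{}}) \<in> borel_measurable pos_reals"
proof -
  have "(\<lambda>t. measure (distr (\<mu> t) (CM 1) (time_scale t)) {{}}) \<in> borel_measurable pos_reals"
    by (rule measurable_compose[OF measurable_time_scaled_family
          measurable_measure_subprob_algebra[OF singleton_empty_in_CM[OF compact_UNIV]]])
  moreover have "measure (distr (\<mu> t) (CM 1) (time_scale t)) {{}} = measure (\<mu> t) {{}}"
    if "t \<in> space pos_reals" for t
  proof -
    have t: "t > 0"
      using that by (simp add: pos_reals_def)
    have "time_scale t -` {{}} \<inter> space (\<mu> t) = {{}}"
      by (auto simp: time_scale_def space_mu[OF t] closed_sets_on_def)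
    then show ?thesis
      using measure_distr[OF measurable_time_scale_mu[OF t] singleton_empty_in_CM[OF compact_UNIV]]
      by simp
  qed
  ultimately show ?thesis
    by (rule measurable_cong[THEN iffD1, rotated])
qed

lemma borel_section_empty_unit:
  shows "borel_section \<mu> R empty_unit"
  unfolding borel_section_def
proof (intro conjI allI impI ballI)
  show "in_L2 (\<mu> t) (empty_unit t)" if "t > 0" for t
    using in_L2_empty_unit that .
  fix A :: "(real \<times> 'l) set set"
  have "(\<lambda>t. complex_of_real (sqrt (measure (\<mu> t) {{}}) * indicator A {})) \<in> borel_measurable pos_reals"
    using borel_measurable_measure_empty by measurable
  then show "(\<lambda>t. \<integral>Z. empty_unit t Z * indicator A (time_scale t Z) \<partial>\<mu> t) \<in> borel_measurable pos_reals"
    by (rule measurable_cong[THEN iffD1, rotated]) (simp add: integral_empty_unit_indicator pos_reals_def)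
qed

lemma is_unit_empty_unit:
  shows "is_unit \<mu> R empty_unit"
  unfolding is_unit_def
proof (intro conjI allI impI)
  show "borel_section \<mu> R empty_unit"
    by (rule borel_section_empty_unit)
  show "\<exists>t>0. \<not> (AE Z in \<mu> t. empty_unit t Z = 0)"
    using empty_unit_not_AE_zero[OF zero_less_one] zero_less_one by blast
  fix s t :: real
  assume s: "s > 0" and t: "t > 0"
  show "AE Z in \<mu> (s + t). empty_unit (s + t) Z = U_prod \<mu> s t (empty_unit s) (empty_unit t) Z"
    using empty_unit_factorizes[OF s t] s t by (intro AE_I2) (simp add: space_mu)
qed

end

lemma measurable_factorizing_family_imp_borel_factorizing_family:
  fixes \<mu> :: "real \<Rightarrow> (real \<times> 'l::topological_space) set measure"
  assumes "compact (UNIV :: 'l set)" "measurable_factorizing_family \<mu> R \<Delta>"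
  shows "borel_factorizing_family \<mu> R"
proof (intro borel_factorizing_family.intro factorizing_family.intro borel_factorizing_family_axioms.intro)
  note family = assms(2)[unfolded measurable_factorizing_family_def]
  fix s t r :: real and A
  show "compact (UNIV :: 'l set)"
    by (fact assms(1))
  show "t > 0 \<Longrightarrow> prob_space (\<mu> t)" "t > 0 \<Longrightarrow> sets (\<mu> t) = sets (CM t)"
    "s > 0 \<Longrightarrow> t > 0 \<Longrightarrow> absolutely_continuous (\<mu> (s + t)) (concat_measure \<mu> s t)"
    "s > 0 \<Longrightarrow> t > 0 \<Longrightarrow> absolutely_continuous (concat_measure \<mu> s t) (\<mu> (s + t))"
    "t > 0 \<Longrightarrow> r \<in> {0..t} \<Longrightarrow> emeasure (\<mu> t) {Z \<in> space (\<mu> t). Z \<inter> ({r} \<times> UNIV) \<noteq> {}} = 0"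
    "ring_of_sets (closed_sets_on 1) R" "sigma_sets (closed_sets_on 1) R = sets (CM 1)"
    "A \<in> R \<Longrightarrow> (\<lambda>t. measure (distr (\<mu> t) (CM 1) (time_scale t)) A) \<in> borel_measurable pos_reals"
    using family by simp_all
qed

theorem corollary3p3:
  fixes \<mu> :: "real \<Rightarrow> (real \<times> 'l::{second_countable_topology, t2_space}) set measure"
    and R :: "(real \<times> 'l) set set set"
    and \<Delta> :: "real \<Rightarrow> real \<Rightarrow> (real \<times> 'l) set \<Rightarrow> real"
  assumes "compact (UNIV :: 'l set)"
    and "measurable_factorizing_family \<mu> R \<Delta>"
  shows "spatial_random_set_system \<mu> R"
proof -
  interpret borel_factorizing_family \<mu> R
    using measurable_factorizing_family_imp_borel_factorizing_family[OF assms] .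
  show ?thesis
    unfolding spatial_random_set_system_def using is_unit_empty_unit by blast
qed

end
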